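(* Let $L\subseteq\mathbb{R}^n$ be a cocompact lattice and $O\subseteq\mathbb{R}^n$ a nonempty open subset such that $v_1+v_2\in O$ for all $v_1,v_2\in O$. Then $O\cap L\neq\emptyset$. *)

theory Defs
  imports "HOL-Analysis.Analysis"
begin

definition additive_subgroup :: "'a::ab_group_add set \<Rightarrow> bool" where
  "additive_subgroup L \<longleftrightarrow>
     0 \<in> L \<and> (\<forall>x\<in>L. \<forall>y\<in>L. x + y \<in> L) \<and> (\<forall>x\<in>L. - x \<in> L)"

text \<open>A cocompact lattice in R^n: a discrete additive subgroup L such that the
  quotient R^n / L is compact, i.e. some compact set K satisfies K + L = R^n.\<close>
definition cocompact_lattice :: "(real ^ 'n) set \<Rightarrow> bool" where
  "cocompact_lattice L \<longleftrightarrow>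
     additive_subgroup L \<and> discrete L \<and>
     (\<exists>K. compact K \<and> {k + l | k l. k \<in> K \<and> l \<in> L} = UNIV)"

end

theory Submission
  imports Defs
begin

text \<open>An additively closed open set containing a ball \<open>B(u, r)\<close> contains every dilate
  \<open>B(m u, m r)\<close>, hence balls of arbitrarily large radius. On the other hand, if a bounded
  set \<open>K\<close> satisfies \<open>K + L = \<real>\<^sup>n\<close>, every ball whose radius exceeds the size of \<open>K\<close> meets \<open>L\<close>.\<close>

lemma scaleR_of_nat_mem_additively_closed:
  fixes U :: "'a::real_vector set"
  assumes add: "\<And>x y. x \<in> U \<Longrightarrow> y \<in> U \<Longrightarrow> x + y \<in> U"
    and "x \<in> U" and "n > 0"
  shows "real n *\<^sub>R x \<in> U"
  using \<open>n > 0\<close>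
proof (induction n rule: nat_induct_non_zero)
  case 1
  show ?case using \<open>x \<in> U\<close> by simp
next
  case (Suc n)
  have "real (Suc n) *\<^sub>R x = real n *\<^sub>R x + x"
    by (simp add: algebra_simps)
  then show ?case using add Suc.IH \<open>x \<in> U\<close> by simp
qed

lemma ball_scaleR_subset_image:
  fixes u :: "'a::real_normed_vector"
  assumes "c > 0"
  shows "ball (c *\<^sub>R u) (c * r) \<subseteq> (*\<^sub>R) c ` ball u r"
proof
  fix y assume "y \<in> ball (c *\<^sub>R u) (c * r)"
  then have "norm (y - c *\<^sub>R u) < c * r"
    by (simp add: dist_norm norm_minus_commute)
  moreover have "(1 / c) *\<^sub>R y - u = (1 / c) *\<^sub>R (y - c *\<^sub>R u)"
    using assms by (simp add: algebra_simps)
  then have "dist ((1 / c) *\<^sub>R y) u = norm (y - c *\<^sub>R u) / c"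
    using assms by (simp add: dist_norm)
  ultimately have "(1 / c) *\<^sub>R y \<in> ball u r"
    using assms by (simp add: dist_commute pos_divide_less_eq mult.commute)
  moreover have "y = c *\<^sub>R ((1 / c) *\<^sub>R y)"
    using assms by simp
  ultimately show "y \<in> (*\<^sub>R) c ` ball u r"
    by blast
qed

lemma additively_closed_open_contains_large_ball:
  fixes U :: "'a::real_normed_vector set"
  assumes "open U" and "U \<noteq> {}"
    and add: "\<And>x y. x \<in> U \<Longrightarrow> y \<in> U \<Longrightarrow> x + y \<in> U"
  shows "\<exists>c. ball c R \<subseteq> U"
proof -
  obtain u where "u \<in> U"
    using \<open>U \<noteq> {}\<close> by blast
  then obtain r where "r > 0" and ball_u: "ball u r \<subseteq> U"
    using \<open>open U\<close> open_contains_ball by blast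
  obtain m :: nat where "R < real m * r"
    using reals_Archimedean3[OF \<open>r > 0\<close>] by blast
  define n where "n = Suc m"
  have "n > 0" and "R < real n * r"
    using \<open>R < real m * r\<close> \<open>r > 0\<close> by (auto simp: n_def algebra_simps)
  have "ball (real n *\<^sub>R u) (real n * r) \<subseteq> (*\<^sub>R) (real n) ` ball u r"
    using \<open>n > 0\<close> by (intro ball_scaleR_subset_image) simp
  also have "\<dots> \<subseteq> U"
    using ball_u scaleR_of_nat_mem_additively_closed[OF add _ \<open>n > 0\<close>] by blast
  finally have "ball (real n *\<^sub>R u) (real n * r) \<subseteq> U" .
  moreover have "ball (real n *\<^sub>R u) R \<subseteq> ball (real n *\<^sub>R u) (real n * r)"
    using \<open>R < real n * r\<close> by (intro subset_ball) simp
  ultimately show ?thesis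
    by blast
qed

lemma bounded_translates_cover_imp_balls_meet:
  fixes K L :: "'a::real_normed_vector set"
  assumes "bounded K" and cover: "{k + l | k l. k \<in> K \<and> l \<in> L} = UNIV"
  obtains R where "\<And>c. ball c R \<inter> L \<noteq> {}"
proof -
  obtain B where bound: "\<And>k. k \<in> K \<Longrightarrow> norm k \<le> B"
    using \<open>bounded K\<close> bounded_iff by blast
  have "ball c (B + 1) \<inter> L \<noteq> {}" for c
  proof -
    have "c \<in> {k + l | k l. k \<in> K \<and> l \<in> L}"
      using cover by simp
    then obtain k l where "k \<in> K" "l \<in> L" "c = k + l"
      by blast
    then have "dist c l \<le> B"
      using bound by (simp add: dist_norm)
    then have "l \<in> ball c (B + 1)"
      by simp
    then show ?thesis
      using \<open>l \<in> L\<close> by blast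
  qed
  then show thesis ..
qed

theorem mainTheorem13:
  fixes L U :: "(real ^ 'n) set"
  assumes "cocompact_lattice L"
    and "open U" and "U \<noteq> {}"
    and "\<And>v1 v2. v1 \<in> U \<Longrightarrow> v2 \<in> U \<Longrightarrow> v1 + v2 \<in> U"
  shows "U \<inter> L \<noteq> {}"
proof -
  obtain K where "compact K" and "{k + l | k l. k \<in> K \<and> l \<in> L} = UNIV"
    using assms(1) unfolding cocompact_lattice_def by blast
  then obtain R where meets: "\<And>c. ball c R \<inter> L \<noteq> {}"
    using bounded_translates_cover_imp_balls_meet compact_imp_bounded by blast
  obtain c where "ball c R \<subseteq> U"
    using additively_closed_open_contains_large_ball assms(2-4) by blast
  then show ?thesis
    using meets[of c] by blast
qed

end
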